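(* Let $p_d^+$, $p_d^-$ and $p_g$ be probability densities on $\mathcal{X}\subseteq\mathbb{R}^n$, let $\beta^+,\beta^-$ be real weights and let $a,b^+,b^-,c$ be real class labels with $b^+>b^-$ and $a\leq \frac{b^++b^-}{2}$. For a discriminator $D:\mathcal{X}\to\mathbb{R}$ define the Rumi-LSGAN losses $$\mathcal{L}^{LS}_{D} = \beta^+ \mathbb{E}_{\boldsymbol{x} \sim p_d^+} [ ( D(\boldsymbol{x}) - b^+ )^2 ] + \beta^- \mathbb{E}_{\boldsymbol{x} \sim p_d^-} [ ( D(\boldsymbol{x}) - b^- )^2 ] + \mathbb{E}_{\boldsymbol{x} \sim p_g} [ ( D(\boldsymbol{x}) - a)^2 ],$$ $$\mathcal{L}^{LS}_{G} = \beta^+ \mathbb{E}_{\boldsymbol{x} \sim p_d^+} [ ( D^*(\boldsymbol{x}) - c )^2 ] + \beta^- \mathbb{E}_{\boldsymbol{x} \sim p_d^-} [ ( D^*(\boldsymbol{x}) - c )^2 ] + \mathbb{E}_{\boldsymbol{x} \sim p_g} [ ( D^*(\boldsymbol{x}) - c)^2 ],$$ where $D^*$ is the minimizer of $\mathcal{L}^{LS}_D$ for the given $p_g$, and $\mathcal{L}^{LS}_G$ is minimized over $p_g$ subject to the constraints $\int_{\mathcal{X}}p_g(\boldsymbol{x})\,\mathrm{d}\boldsymbol{x}=1$ and $p_g(\boldsymbol{x})\geq0$ for all $\boldsymbol{x}$. Then the optimal discriminator and the optimal generator density are $$D^*(\boldsymbol{x}) = \frac{b^+ \beta^+ p_d^+(\boldsymbol{x})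 + b^-\beta^-p_d^-(\boldsymbol{x}) + a\,p_g(\boldsymbol{x}) }{\beta^+p_d^+(\boldsymbol{x}) + \beta^-p_d^-(\boldsymbol{x}) + p_g(\boldsymbol{x})},\qquad p_g^*(\boldsymbol{x}) = \beta^+ \eta^+ p_d^+(\boldsymbol{x}) + \beta^- \eta^- p_d^-(\boldsymbol{x}),$$ where $$\eta^+ = \frac{(1+\beta^-)(a - b^+) - \beta^-(a-b^-)}{\beta^+(a - b^+) + \beta^-(a-b^-)},\qquad \eta^- = \frac{(1+\beta^+)(a-b^-) - \beta^+(a - b^+)}{\beta^+(a - b^+) + \beta^-(a-b^-)}.$$
   Context: $p_d^+$ is the density of the "positive" data (target distribution), $p_d^-$ the density of the "negative" data (to be avoided), and $p_g$ the density of the generator's samples. The optimization over $D$ and over $p_g$ (with the constraints handled via Karush-Kuhn-Tucker multipliers) is carried out as a functional optimization, point-wise over $\mathcal{X}$.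
   Formalization: The weights $\beta^+$ and $\beta^-$ are positive, the denominator $\beta^+(a-b^+)+\beta^-(a-b^-)$ is nonzero, and $p_g^*$ is assumed nonnegative on $\mathcal{X}$. Each condition added here is assumed in the paper as well or is needed for the statement above to hold. *)

theory Defs
  imports "HOL-Analysis.Analysis"
begin

definition is_density :: "'a::euclidean_space set \<Rightarrow> ('a \<Rightarrow> real) \<Rightarrow> bool" where
  "is_density X p \<longleftrightarrow> p \<in> borel_measurable lborel \<and> (\<forall>x\<in>X. 0 \<le> p x)
     \<and> (\<integral>\<^sup>+x\<in>X. ennreal (p x) \<partial>lborel) = 1"

definition expect :: "'a::euclidean_space set \<Rightarrow> ('a \<Rightarrow> real) \<Rightarrow> ('a \<Rightarrow> real) \<Rightarrow> ennreal" where
  "expect X p g = (\<integral>\<^sup>+x\<in>X. ennreal (p x * g x) \<partial>lborel)"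

definition LD :: "'a::euclidean_space set \<Rightarrow> real \<Rightarrow> real \<Rightarrow> real \<Rightarrow> real \<Rightarrow> real
     \<Rightarrow> ('a \<Rightarrow> real) \<Rightarrow> ('a \<Rightarrow> real) \<Rightarrow> ('a \<Rightarrow> real) \<Rightarrow> ('a \<Rightarrow> real) \<Rightarrow> ennreal" where
  "LD X betap betam bp bm a pp pm pg D =
     ennreal betap * expect X pp (\<lambda>x. (D x - bp)^2)
   + ennreal betam * expect X pm (\<lambda>x. (D x - bm)^2)
   + expect X pg (\<lambda>x. (D x - a)^2)"

definition Dopt :: "real \<Rightarrow> real \<Rightarrow> real \<Rightarrow> real \<Rightarrow> real
     \<Rightarrow> ('a \<Rightarrow> real) \<Rightarrow> ('a \<Rightarrow> real) \<Rightarrow> ('a \<Rightarrow> real) \<Rightarrow> 'a \<Rightarrow> real" where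
  "Dopt betap betam bp bm a pp pm pg x =
     (bp * betap * pp x + bm * betam * pm x + a * pg x) / (betap * pp x + betam * pm x + pg x)"

definition LG :: "'a::euclidean_space set \<Rightarrow> real \<Rightarrow> real \<Rightarrow> real \<Rightarrow> real \<Rightarrow> real \<Rightarrow> real
     \<Rightarrow> ('a \<Rightarrow> real) \<Rightarrow> ('a \<Rightarrow> real) \<Rightarrow> ('a \<Rightarrow> real) \<Rightarrow> ennreal" where
  "LG X betap betam bp bm a c pp pm pg =
     (let D = Dopt betap betam bp bm a pp pm pg in
       ennreal betap * expect X pp (\<lambda>x. (D x - c)^2)
     + ennreal betam * expect X pm (\<lambda>x. (D x - c)^2)
     + expect X pg (\<lambda>x. (D x - c)^2))"

definition eta_plus :: "real \<Rightarrow> real \<Rightarrow> real \<Rightarrow> real \<Rightarrow> real \<Rightarrow> real" where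
  "eta_plus betap betam bp bm a =
     ((1 + betam) * (a - bp) - betam * (a - bm)) / (betap * (a - bp) + betam * (a - bm))"

definition eta_minus :: "real \<Rightarrow> real \<Rightarrow> real \<Rightarrow> real \<Rightarrow> real \<Rightarrow> real" where
  "eta_minus betap betam bp bm a =
     ((1 + betap) * (a - bm) - betap * (a - bp)) / (betap * (a - bp) + betam * (a - bm))"

end

theory Submission
  imports Defs
begin

text \<open>Both optimisations are pointwise. For fixed \<open>x\<close> the discriminator integrand is a weighted
sum of squares \<open>\<Sum> w\<^sub>i (D - y\<^sub>i)\<^sup>2\<close>, minimised by the weighted mean of the labels, which is \<open>D\<^sup>*\<close>.
With \<open>D\<^sup>*\<close> plugged in, the generator integrand is \<open>W (D\<^sup>* - c)\<^sup>2\<close>, where \<open>W = \<beta>\<^sup>+p\<^sub>d\<^sup>+ + \<beta>\<^sup>-p\<^sub>d\<^sup>- + p\<^sub>g\<close>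
and \<open>W D\<^sup>*\<close> is affine in \<open>p\<^sub>g\<close>. The constants \<open>\<eta>\<^sup>\<plusminus>\<close> are chosen so that for \<open>p\<^sub>g = p\<^sub>g\<^sup>*\<close> the
discriminator is the constant \<open>d\<^sup>* = (a + \<beta>\<^sup>+b\<^sup>+ + \<beta>\<^sup>-b\<^sup>-) / (1 + \<beta>\<^sup>+ + \<beta>\<^sup>-)\<close>. The tangent bound
\<open>W t\<^sup>2 \<ge> 2 e W t - e\<^sup>2 W\<close> at \<open>e = d\<^sup>* - c\<close> then bounds the generator integrand from below by a
function affine in \<open>p\<^sub>g\<close>, with equality at \<open>p\<^sub>g\<^sup>*\<close>; since all densities have integral 1, this
lower bound integrates to the same value \<open>(d\<^sup>* - c)\<^sup>2 (1 + \<beta>\<^sup>+ + \<beta>\<^sup>-)\<close> for every \<open>p\<^sub>g\<close>.\<close>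

lemma weighted_mean_minimizes_sum_squares:
  fixes w1 w2 w3 y1 y2 y3 y :: real
  assumes "0 \<le> w1" "0 \<le> w2" "0 \<le> w3"
  defines "m \<equiv> (w1 * y1 + w2 * y2 + w3 * y3) / (w1 + w2 + w3)"
  shows "w1 * (m - y1)^2 + w2 * (m - y2)^2 + w3 * (m - y3)^2
       \<le> w1 * (y - y1)^2 + w2 * (y - y2)^2 + w3 * (y - y3)^2"
proof (cases "w1 + w2 + w3 = 0")
  case True
  then have "w1 = 0" "w2 = 0" "w3 = 0" using assms by linarith+
  then show ?thesis by simp
next
  case False
  then have mean: "(w1 + w2 + w3) * m = w1 * y1 + w2 * y2 + w3 * y3"
    unfolding m_def by simp
  have "w1 * (y - y1)^2 + w2 * (y - y2)^2 + w3 * (y - y3)^2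
      = w1 * (m - y1)^2 + w2 * (m - y2)^2 + w3 * (m - y3)^2 + (w1 + w2 + w3) * (y - m)^2
        + 2 * (y - m) * ((w1 + w2 + w3) * m - (w1 * y1 + w2 * y2 + w3 * y3))"
    by (simp add: power2_eq_square algebra_simps)
  then show ?thesis using mean assms by simp
qed

lemma eta_weighted_sum_eq_1:
  assumes "betap * (a - bp) + betam * (a - bm) \<noteq> 0"
  shows "betap * eta_plus betap betam bp bm a + betam * eta_minus betap betam bp bm a = 1"
  using assms unfolding eta_plus_def eta_minus_def
  by (simp add: add_divide_distrib[symmetric]) (simp add: divide_eq_1_iff algebra_simps)

lemma ennreal_integral_le_nn_integral:
  fixes f :: "'a \<Rightarrow> real"
  assumes "integrable M f"
  shows "ennreal (integral\<^sup>L M f) \<le> (\<integral>\<^sup>+x. ennreal (f x) \<partial>M)"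
proof -
  have pos: "integrable M (\<lambda>x. max 0 (f x))" using assms by auto
  have "ennreal (integral\<^sup>L M f) \<le> ennreal (integral\<^sup>L M (\<lambda>x. max 0 (f x)))"
    using assms pos by (intro ennreal_leI integral_mono) auto
  also have "\<dots> = (\<integral>\<^sup>+x. ennreal (max 0 (f x)) \<partial>M)"
    using pos by (intro nn_integral_eq_integral[symmetric]) auto
  finally show ?thesis by (simp add: ennreal_max_0)
qed

lemma nn_integral_has_bochner_integral:
  fixes f :: "'a \<Rightarrow> real"
  assumes "has_bochner_integral M f r" "\<forall>x\<in>space M. 0 \<le> f x"
  shows "(\<integral>\<^sup>+x. ennreal (f x) \<partial>M) = ennreal r"
proof -
  have "integrable M f" "integral\<^sup>L M f = r"
    using assms(1) by (simp_all add: has_bochner_integral_iff)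
  moreover have "AE x in M. 0 \<le> f x" using assms(2) by (rule AE_I2[OF bspec])
  ultimately show ?thesis by (simp add: nn_integral_eq_integral)
qed

lemma is_density_iff_has_bochner_integral:
  assumes "X \<in> sets lborel"
  shows "is_density X p \<longleftrightarrow> p \<in> borel_measurable lborel \<and> (\<forall>x\<in>X. 0 \<le> p x)
           \<and> has_bochner_integral (restrict_space lborel X) p 1"
proof -
  let ?M = "restrict_space lborel X"
  have "(\<integral>\<^sup>+x\<in>X. ennreal (p x) \<partial>lborel) = (\<integral>\<^sup>+x. ennreal (p x) \<partial>?M)"
    using assms by (simp add: nn_integral_restrict_space)
  moreover have "(\<integral>\<^sup>+x. ennreal (p x) \<partial>?M) = 1 \<longleftrightarrow> has_bochner_integral ?M p 1"
    if "p \<in> borel_measurable lborel" "\<forall>x\<in>X. 0 \<le> p x"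
  proof
    have "p \<in> borel_measurable ?M" "\<forall>x\<in>space ?M. 0 \<le> p x"
      using that by (simp_all add: measurable_restrict_space1 space_restrict_space)
    then show "(\<integral>\<^sup>+x. ennreal (p x) \<partial>?M) = 1 \<Longrightarrow> has_bochner_integral ?M p 1"
      by (intro has_bochner_integral_nn_integral AE_I2) auto
    show "has_bochner_integral ?M p 1 \<Longrightarrow> (\<integral>\<^sup>+x. ennreal (p x) \<partial>?M) = 1"
      using \<open>\<forall>x\<in>space ?M. 0 \<le> p x\<close> by (simp add: nn_integral_has_bochner_integral)
  qed
  ultimately show ?thesis unfolding is_density_def by auto
qed

lemma expect_weighted_sum:
  fixes p1 p2 p3 g1 g2 g3 :: "'a::euclidean_space \<Rightarrow> real"
  assumes X: "X \<in> sets lborel"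
    and meas: "p1 \<in> borel_measurable lborel" "p2 \<in> borel_measurable lborel"
      "p3 \<in> borel_measurable lborel" "g1 \<in> borel_measurable lborel"
      "g2 \<in> borel_measurable lborel" "g3 \<in> borel_measurable lborel"
    and p_nonneg: "\<forall>x\<in>X. 0 \<le> p1 x \<and> 0 \<le> p2 x \<and> 0 \<le> p3 x"
    and g_nonneg: "\<And>x. 0 \<le> g1 x" "\<And>x. 0 \<le> g2 x" "\<And>x. 0 \<le> g3 x"
    and c: "0 \<le> c1" "0 \<le> c2"
  shows "ennreal c1 * expect X p1 g1 + ennreal c2 * expect X p2 g2 + expect X p3 g3
       = (\<integral>\<^sup>+x. ennreal (c1 * p1 x * g1 x + c2 * p2 x * g2 x + p3 x * g3 x)
            \<partial>restrict_space lborel X)"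
proof -
  let ?M = "restrict_space lborel X"
  have "expect X p g = (\<integral>\<^sup>+x. ennreal (p x * g x) \<partial>?M)" for p g :: "'a \<Rightarrow> real"
    using X by (simp add: expect_def nn_integral_restrict_space)
  moreover have "(\<lambda>x. p x * g x) \<in> borel_measurable ?M"
    if "p \<in> borel_measurable lborel" "g \<in> borel_measurable lborel" for p g :: "'a \<Rightarrow> real"
    using that by (simp add: measurable_restrict_space1)
  ultimately have "ennreal c1 * expect X p1 g1 + ennreal c2 * expect X p2 g2 + expect X p3 g3
      = (\<integral>\<^sup>+x. ennreal c1 * ennreal (p1 x * g1 x) + ennreal c2 * ennreal (p2 x * g2 x)
            + ennreal (p3 x * g3 x) \<partial>?M)"
    using meas by (simp add: nn_integral_add nn_integral_cmult)
  also have "\<dots> = (\<integral>\<^sup>+x. ennreal (c1 * p1 x * g1 x + c2 * p2 x * g2 x + p3 x * g3 x) \<partial>?M)"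
    using p_nonneg g_nonneg c
    by (intro nn_integral_cong) (simp add: space_restrict_space ennreal_mult' ennreal_plus mult.assoc)
  finally show ?thesis .
qed

locale rumi_lsgan =
  fixes X :: "'a::euclidean_space set"
    and pp pm :: "'a \<Rightarrow> real"
    and betap betam bp bm a :: real
  assumes X_sets: "X \<in> sets lborel"
    and pp_density: "is_density X pp"
    and pm_density: "is_density X pm"
    and betap_pos: "0 < betap"
    and betam_pos: "0 < betam"
begin

abbreviation M :: "'a measure" where
  "M \<equiv> restrict_space lborel X"

abbreviation weight :: "('a \<Rightarrow> real) \<Rightarrow> 'a \<Rightarrow> real" where
  "weight pg x \<equiv> betap * pp x + betam * pm x + pg x"

abbreviation D_opt :: "('a \<Rightarrow> real) \<Rightarrow> 'a \<Rightarrow> real" where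
  "D_opt pg \<equiv> Dopt betap betam bp bm a pp pm pg"

abbreviation loss_D :: "('a \<Rightarrow> real) \<Rightarrow> ('a \<Rightarrow> real) \<Rightarrow> ennreal" where
  "loss_D pg D \<equiv> LD X betap betam bp bm a pp pm pg D"

abbreviation loss_G :: "real \<Rightarrow> ('a \<Rightarrow> real) \<Rightarrow> ennreal" where
  "loss_G c pg \<equiv> LG X betap betam bp bm a c pp pm pg"

lemma is_densityD:
  assumes "is_density X p"
  shows "p \<in> borel_measurable lborel" "\<forall>x\<in>X. 0 \<le> p x" "has_bochner_integral M p 1"
  using assms by (simp_all add: is_density_iff_has_bochner_integral[OF X_sets])

lemma weight_nonneg:
  assumes "x \<in> X" "0 \<le> q x"
  shows "0 \<le> weight q x"
  using assms is_densityD(2)[OF pp_density] is_densityD(2)[OF pm_density] betap_pos betam_pos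
  by simp

lemma has_bochner_integral_weight:
  assumes "is_density X q"
  shows "has_bochner_integral M (\<lambda>x. weight q x) (betap + betam + 1)"
proof -
  have "has_bochner_integral M (\<lambda>x. betap * pp x + betam * pm x + q x) (betap * 1 + betam * 1 + 1)"
    using is_densityD(3)[OF pp_density] is_densityD(3)[OF pm_density] is_densityD(3)[OF assms]
    by (intro has_bochner_integral_add has_bochner_integral_mult_right)
  then show ?thesis by simp
qed

lemma D_opt_measurable:
  assumes "q \<in> borel_measurable lborel"
  shows "D_opt q \<in> borel_measurable lborel"
  using is_densityD(1)[OF pp_density] is_densityD(1)[OF pm_density] assms
  unfolding Dopt_def[abs_def] by measurable

lemma weight_mult_D_opt:
  assumes "x \<in> X" "0 \<le> q x"
  shows "weight q x * D_opt q x = bp * betap * pp x + bm * betam * pm x + a * q x"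
proof (cases "weight q x = 0")
  case True
  \<comment> \<open>Here \<open>D_opt q x\<close> is the junk value \<open>_ / 0 = 0\<close>, but the numerator vanishes as well.\<close>
  have "0 \<le> betap * pp x" "0 \<le> betam * pm x"
    using assms is_densityD(2)[OF pp_density] is_densityD(2)[OF pm_density] betap_pos betam_pos
    by simp_all
  with True assms have "pp x = 0" "pm x = 0" "q x = 0"
    using betap_pos betam_pos by (auto simp: add_nonneg_eq_0_iff)
  then show ?thesis by (simp add: Dopt_def)
qed (simp add: Dopt_def)

lemma loss_D_eq_nn_integral:
  assumes "is_density X pg" "D \<in> borel_measurable lborel"
  shows "loss_D pg D = (\<integral>\<^sup>+x. ennreal (betap * pp x * (D x - bp)^2 + betam * pm x * (D x - bm)^2
                                      + pg x * (D x - a)^2) \<partial>M)"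
  unfolding LD_def using assms is_densityD[OF pp_density] is_densityD[OF pm_density]
    is_densityD[OF assms(1)] betap_pos betam_pos
  by (intro expect_weighted_sum X_sets) auto

lemma loss_G_eq_nn_integral:
  assumes "is_density X q"
  shows "loss_G c q = (\<integral>\<^sup>+x. ennreal (weight q x * (D_opt q x - c)^2) \<partial>M)"
proof -
  have "loss_G c q = (\<integral>\<^sup>+x. ennreal (betap * pp x * (D_opt q x - c)^2
                                     + betam * pm x * (D_opt q x - c)^2
                                     + q x * (D_opt q x - c)^2) \<partial>M)"
    unfolding LG_def Let_def using assms is_densityD[OF pp_density] is_densityD[OF pm_density]
      is_densityD[OF assms] betap_pos betam_pos D_opt_measurable
    by (intro expect_weighted_sum X_sets) auto
  then show ?thesis by (simp add: algebra_simps)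
qed

theorem D_opt_minimizes_loss_D:
  assumes "is_density X pg" "D \<in> borel_measurable lborel"
  shows "loss_D pg (D_opt pg) \<le> loss_D pg D"
proof -
  have D_opt: "D_opt pg \<in> borel_measurable lborel"
    using is_densityD(1)[OF assms(1)] by (rule D_opt_measurable)
  show ?thesis
    unfolding loss_D_eq_nn_integral[OF assms] loss_D_eq_nn_integral[OF assms(1) D_opt]
  proof (intro nn_integral_mono ennreal_leI)
    fix x assume "x \<in> space M"
    then have "0 \<le> betap * pp x" "0 \<le> betam * pm x" "0 \<le> pg x"
      using is_densityD(2)[OF pp_density] is_densityD(2)[OF pm_density]
        is_densityD(2)[OF assms(1)] betap_pos betam_pos
      by (simp_all add: space_restrict_space)
    from weighted_mean_minimizes_sum_squares[OF this, of bp bm a "D x"]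
    show "betap * pp x * (D_opt pg x - bp)^2 + betam * pm x * (D_opt pg x - bm)^2
            + pg x * (D_opt pg x - a)^2
          \<le> betap * pp x * (D x - bp)^2 + betam * pm x * (D x - bm)^2 + pg x * (D x - a)^2"
      by (simp add: Dopt_def mult.commute mult.left_commute)
  qed
qed

end

locale rumi_lsgan_eta = rumi_lsgan +
  assumes eta_den: "betap * (a - bp) + betam * (a - bm) \<noteq> 0"
begin

definition d_star :: real where
  "d_star = (a + betap * bp + betam * bm) / (1 + betap + betam)"

definition pg_star :: "'a \<Rightarrow> real" where
  "pg_star x = betap * eta_plus betap betam bp bm a * pp x
              + betam * eta_minus betap betam bp bm a * pm x"

lemma eta_plus_mult_gap: "(a - d_star) * eta_plus betap betam bp bm a = d_star - bp"
  and eta_minus_mult_gap: "(a - d_star) * eta_minus betap betam bp bm a = d_star - bm"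
proof -
  have S: "1 + betap + betam \<noteq> 0" using betap_pos betam_pos by simp
  have "a - d_star = (betap * (a - bp) + betam * (a - bm)) / (1 + betap + betam)"
       "d_star - bp = ((1 + betam) * (a - bp) - betam * (a - bm)) / (1 + betap + betam)"
       "d_star - bm = ((1 + betap) * (a - bm) - betap * (a - bp)) / (1 + betap + betam)"
    unfolding d_star_def using S by (simp_all add: field_simps; simp add: algebra_simps)+
  then show "(a - d_star) * eta_plus betap betam bp bm a = d_star - bp"
    "(a - d_star) * eta_minus betap betam bp bm a = d_star - bm"
    unfolding eta_plus_def eta_minus_def using eta_den by simp_all
qed

lemma D_opt_numerator_pg_star:
  "bp * betap * pp x + bm * betam * pm x + a * pg_star x = d_star * weight pg_star x"
proof -
  have "(a - d_star) * pg_star x = betap * pp x * (d_star - bp) + betam * pm x * (d_star - bm)"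
    unfolding pg_star_def eta_plus_mult_gap[symmetric] eta_minus_mult_gap[symmetric]
    by (simp add: algebra_simps)
  then show ?thesis by (simp add: algebra_simps)
qed

lemma weight_mult_D_opt_minus:
  assumes "x \<in> X" "0 \<le> q x"
  shows "weight q x * (D_opt q x - c) = (d_star - c) * weight pg_star x + (a - c) * (q x - pg_star x)"
  using weight_mult_D_opt[of x q] assms D_opt_numerator_pg_star[of x] by (simp add: algebra_simps)

lemma generator_integrand_ge:
  assumes "x \<in> X" "0 \<le> q x"
  shows "(d_star - c)^2 * weight pg_star x
           + (d_star - c) * (2 * (a - c) - (d_star - c)) * (weight q x - weight pg_star x)
         \<le> weight q x * (D_opt q x - c)^2"
proof -
  define e where "e = d_star - c"
  define W where "W = weight q x"
  define S where "S = weight pg_star x"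
  define t where "t = D_opt q x - c"
  have "0 \<le> W * (t - e)^2"
    using weight_nonneg[of x q] assms unfolding W_def by simp
  then have tangent: "2 * e * (W * t) - e^2 * W \<le> W * t^2"
    by (simp add: power2_eq_square algebra_simps)
  have Wt: "W * t = e * S + (a - c) * (W - S)"
    using weight_mult_D_opt_minus[of x q c] assms unfolding W_def S_def t_def e_def by simp
  have "e^2 * S + e * (2 * (a - c) - e) * (W - S) = 2 * e * (e * S + (a - c) * (W - S)) - e^2 * W"
    by (simp add: power2_eq_square algebra_simps)
  also have "\<dots> = 2 * e * (W * t) - e^2 * W"
    by (simp only: Wt)
  finally have "e^2 * S + e * (2 * (a - c) - e) * (W - S) = 2 * e * (W * t) - e^2 * W" .
  with tangent show ?thesis unfolding e_def W_def S_def t_def by simp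
qed

lemma generator_integrand_pg_star:
  assumes "x \<in> X" "0 \<le> pg_star x"
  shows "weight pg_star x * (D_opt pg_star x - c)^2 = (d_star - c)^2 * weight pg_star x"
proof -
  define e where "e = d_star - c"
  define S where "S = weight pg_star x"
  define t where "t = D_opt pg_star x - c"
  have St: "S * t = e * S"
    using weight_mult_D_opt_minus[of x pg_star c] assms unfolding S_def t_def e_def
    by (simp only: diff_self mult_zero_right add_0_right)
  have "S * t^2 = (S * t) * t" by (simp add: power2_eq_square)
  also have "\<dots> = e * (S * t)" by (simp add: St)
  also have "\<dots> = e^2 * S" by (simp add: St power2_eq_square)
  finally show ?thesis unfolding S_def t_def e_def .
qed

lemma is_density_pg_star:
  assumes "\<forall>x\<in>X. 0 \<le> pg_star x"
  shows "is_density X pg_star"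
proof -
  have "has_bochner_integral M pg_star
          (betap * eta_plus betap betam bp bm a * 1 + betam * eta_minus betap betam bp bm a * 1)"
    unfolding pg_star_def[abs_def]
    using is_densityD(3)[OF pp_density] is_densityD(3)[OF pm_density]
    by (intro has_bochner_integral_add has_bochner_integral_mult_right)
  then have "has_bochner_integral M pg_star 1"
    using eta_weighted_sum_eq_1[OF eta_den] by simp
  moreover have "pg_star \<in> borel_measurable lborel"
    unfolding pg_star_def[abs_def]
    using is_densityD(1)[OF pp_density] is_densityD(1)[OF pm_density] by measurable
  ultimately show ?thesis
    using assms by (simp add: is_density_iff_has_bochner_integral[OF X_sets])
qed

lemma loss_G_pg_star:
  assumes "is_density X pg_star"
  shows "loss_G c pg_star = ennreal ((d_star - c)^2 * (betap + betam + 1))"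
proof -
  have nonneg: "\<forall>x\<in>space M. 0 \<le> (d_star - c)^2 * weight pg_star x"
    using weight_nonneg[of _ pg_star] is_densityD(2)[OF assms] by (simp add: space_restrict_space)
  have "loss_G c pg_star = (\<integral>\<^sup>+x. ennreal ((d_star - c)^2 * weight pg_star x) \<partial>M)"
    unfolding loss_G_eq_nn_integral[OF assms] using is_densityD(2)[OF assms]
    by (intro nn_integral_cong) (simp add: space_restrict_space generator_integrand_pg_star)
  also have "\<dots> = ennreal ((d_star - c)^2 * (betap + betam + 1))"
    using has_bochner_integral_mult_right[OF has_bochner_integral_weight[OF assms]] nonneg
    by (rule nn_integral_has_bochner_integral)
  finally show ?thesis .
qed

lemma loss_G_ge:
  assumes "is_density X pg_star" "is_density X q"
  shows "ennreal ((d_star - c)^2 * (betap + betam + 1)) \<le> loss_G c q"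
proof -
  define e where "e = d_star - c"
  define S where "S = betap + betam + 1"
  let ?lower = "\<lambda>x. e^2 * weight pg_star x + e * (2 * (a - c) - e) * (weight q x - weight pg_star x)"
  have "has_bochner_integral M (\<lambda>x. weight q x - weight pg_star x) (S - S)"
    using has_bochner_integral_weight[OF assms(2)] has_bochner_integral_weight[OF assms(1)]
    unfolding S_def by (rule has_bochner_integral_diff)
  with has_bochner_integral_weight[OF assms(1)]
  have "has_bochner_integral M ?lower (e^2 * S + e * (2 * (a - c) - e) * (S - S))"
    unfolding S_def by (intro has_bochner_integral_add[OF has_bochner_integral_mult_right
                                                          has_bochner_integral_mult_right])
  then have "integrable M ?lower" "integral\<^sup>L M ?lower = e^2 * S"
    by (simp_all add: has_bochner_integral_iff)
  then have "ennreal (e^2 * S) \<le> (\<integral>\<^sup>+x. ennreal (?lower x) \<partial>M)"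
    using ennreal_integral_le_nn_integral[of M ?lower] by simp
  also have "\<dots> \<le> loss_G c q"
    unfolding loss_G_eq_nn_integral[OF assms(2)]
  proof (intro nn_integral_mono ennreal_leI)
    fix x assume "x \<in> space M"
    then have "x \<in> X" "0 \<le> q x"
      using is_densityD(2)[OF assms(2)] by (auto simp: space_restrict_space)
    then show "?lower x \<le> weight q x * (D_opt q x - c)^2"
      unfolding e_def by (rule generator_integrand_ge)
  qed
  finally show ?thesis unfolding e_def S_def .
qed

theorem pg_star_minimizes_loss_G:
  assumes "is_density X pg_star" "is_density X q"
  shows "loss_G c pg_star \<le> loss_G c q"
  using loss_G_ge[OF assms] loss_G_pg_star[OF assms(1)] by simp

end

theorem lemma2:
  fixes X :: "'a::euclidean_space set"
    and pp pm pg :: "'a \<Rightarrow> real"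
    and betap betam bp bm a c :: real
  defines "pgstar \<equiv> (\<lambda>x. betap * eta_plus betap betam bp bm a * pp x
                        + betam * eta_minus betap betam bp bm a * pm x)"
  assumes X: "X \<in> sets lborel"
    and dens: "is_density X pp" "is_density X pm" "is_density X pg"
    and beta: "0 < betap" "0 < betam"
    and labels: "bp > bm" "a \<le> (bp + bm) / 2"
    and den: "betap * (a - bp) + betam * (a - bm) \<noteq> 0"
    and feasible: "\<forall>x\<in>X. 0 \<le> pgstar x"
  shows "(\<forall>D \<in> borel_measurable lborel.
            LD X betap betam bp bm a pp pm pg (Dopt betap betam bp bm a pp pm pg)
              \<le> LD X betap betam bp bm a pp pm pg D)
       \<and> is_density X pgstar
       \<and> (\<forall>q. is_density X q \<longrightarrow>
            LG X betap betam bp bm a c pp pm pgstar \<le> LG X betap betam bp bm a c pp pm q)"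
proof -
  interpret rumi_lsgan_eta X pp pm betap betam bp bm a
    using X dens(1,2) beta den by unfold_locales
  have pgstar: "pgstar = pg_star"
    unfolding pgstar_def by (simp add: fun_eq_iff pg_star_def)
  have "is_density X pg_star"
    using feasible unfolding pgstar by (rule is_density_pg_star)
  then show ?thesis
    using D_opt_minimizes_loss_D[OF dens(3)] pg_star_minimizes_loss_G unfolding pgstar by blast
qed

end
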